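(* Let $n\ge2$ and $(\mathbb G,\lVert\cdot\rVert_{\mathrm{sf}})$ be a sub-Finsler free-Carnot group of step 2 and rank $n$, $\mathbb G=\mathbb R^n\times\bigwedge^2(\mathbb R^n)$, with Carnot–Carathéodory distance $d_{\mathrm{cc}}$; fix an adequate scalar product with induced norm $\lVert\cdot\rVert_{\mathrm{eu}}$. There exists a constant $K_2>0$ such that for every $\varepsilon>0$, every $Z\in\bigwedge^2(\mathbb R^n)$ and every $n$-tuple $(g_0,\dots,g_{n-1})\in\mathbb G^n$ with $g_0=0_{\mathbb G}$ and $\mathrm{MinHeight}(\pi(g_1),\dots,\pi(g_{n-1}))\ge\varepsilon$, $$d_{\mathrm{cc}}(g_0,Z*g_{n-1})\le K_2\frac{\lVert Z\rVert_{\mathrm{eu}}}{\varepsilon}+\sum_{j=1}^{n-1}d_{\mathrm{cc}}(g_{j-1},g_j).$$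
   Context: Group law: $(x_1,Y_1)*(x_2,Y_2)=(x_1+x_2,Y_1+Y_2+\tfrac12x_1\wedge x_2)$, $v\wedge w=v\otimes w-w\otimes v$, elements $Z\in\bigwedge^2(\mathbb R^n)$ identified with $(0,Z)$; $\pi(x,Y)=x$. Sub-Finsler structure: a norm on $\mathbb R^n$ extended left-invariantly; horizontal curves from $0_{\mathbb G}$: $\gamma_u(t)=\int_0^tu+\tfrac12\int_0^t(\int_0^su)\wedge u(s)\,ds$, length $\int_0^1\lVert u\rVert_{\mathrm{sf}}$; $d_{\mathrm{cc}}$ is the infimum of lengths of horizontal curves joining two points. Adequate scalar product: $\mathbb R^n\perp\bigwedge^2(\mathbb R^n)$ and $\langle v_1\wedge w_1,v_2\wedge w_2\rangle=\langle v_1,v_2\rangle\langle w_1,w_2\rangle-\langle v_1,w_2\rangle\langle w_1,v_2\rangle$. $\mathrm{MinHeight}(a_1,\dots,a_m):=\min_j d_{\mathrm{eu}}(a_j,\mathrm{span}(a_1,\dots,\widehat a_j,\dots,a_m))$ ($\widehat a_j$ omitted), computed in $\mathbb R^n$ with the Euclidean norm. *)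

theory Defs
  imports "HOL-Analysis.Analysis"
begin

text \<open>Step-2 free Carnot group of rank n = CARD('n).
  R^n is real^'n; the exterior square is represented by antisymmetric matrices
  real^'n^'n, with v \<wedge> w = v \<otimes> w - w \<otimes> v.\<close>

type_synonym ('n) carnot = "(real^'n::finite) \<times> (real^'n^'n)"

definition wedge :: "real^('n::finite) \<Rightarrow> real^'n \<Rightarrow> real^'n^'n" where
  "wedge v w = (\<chi> i j. v$i * w$j - w$i * v$j)"

definition antisym_mat :: "real^('n::finite)^'n \<Rightarrow> bool" where
  "antisym_mat Y \<longleftrightarrow> transpose Y = - Y"

definition in_G :: "('n::finite) carnot \<Rightarrow> bool" where
  "in_G p \<longleftrightarrow> antisym_mat (snd p)"

definition gmult :: "('n::finite) carnot \<Rightarrow> 'n carnot \<Rightarrow> 'n carnot" where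
  "gmult p q = (fst p + fst q, snd p + snd q + (1/2) *\<^sub>R wedge (fst p) (fst q))"

definition gzero :: "('n::finite) carnot" where
  "gzero = (0, 0)"

definition proj :: "('n::finite) carnot \<Rightarrow> real^'n" where
  "proj p = fst p"

text \<open>Endpoint gamma_u(1) of the horizontal curve from the identity with control u.\<close>
definition hend :: "(real \<Rightarrow> real^('n::finite)) \<Rightarrow> 'n carnot" where
  "hend u = (integral {0..1} u,
             (1/2) *\<^sub>R integral {0..1} (\<lambda>s. wedge (integral {0..s} u) (u s)))"

definition is_norm :: "(real^'n \<Rightarrow> real) \<Rightarrow> bool" where
  "is_norm N \<longleftrightarrow> (\<forall>x. 0 \<le> N x) \<and> (\<forall>x. N x = 0 \<longleftrightarrow> x = 0)
     \<and> (\<forall>c x. N (c *\<^sub>R x) = \<bar>c\<bar> * N x) \<and> (\<forall>x y. N (x + y) \<le> N x + N y)"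

text \<open>Carnot-Caratheodory distance for the left-invariant sub-Finsler norm N:
  horizontal curves from p to q are p * gamma_u, with L^1 controls u on [0,1].\<close>
definition dcc :: "(real^('n::finite) \<Rightarrow> real) \<Rightarrow> 'n carnot \<Rightarrow> 'n carnot \<Rightarrow> real" where
  "dcc N p q = Inf {integral {0..1} (\<lambda>t. N (u t)) | u.
      u absolutely_integrable_on {0..1} \<and> gmult p (hend u) = q}"

text \<open>Adequate scalar products: the scalar product on R^n is
  <v,w> = (A v) . (A w) for an invertible matrix A (every scalar product arises so);
  on Lambda^2 the adequate one satisfies <v1^w1,v2^w2> = <v1,v2><w1,w2> - <v1,w2><w1,v2>,
  which in the matrix representation is half the Frobenius product of A M A^T and A N A^T.\<close>
definition eunorm :: "real^('n::finite)^'n \<Rightarrow> real^'n \<Rightarrow> real" where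
  "eunorm A v = norm (A *v v)"

definition eunorm2 :: "real^('n::finite)^'n \<Rightarrow> real^'n^'n \<Rightarrow> real" where
  "eunorm2 A M = norm (A ** M ** transpose A) / sqrt 2"

definition eudist_set :: "real^('n::finite)^'n \<Rightarrow> real^'n \<Rightarrow> (real^'n) set \<Rightarrow> real" where
  "eudist_set A v S = Inf {eunorm A (v - s) | s. s \<in> S}"

definition MinHeight :: "real^('n::finite)^'n \<Rightarrow> (nat \<Rightarrow> real^'n) \<Rightarrow> nat set \<Rightarrow> real" where
  "MinHeight A a I = Min {eudist_set A (a j) (span (a ` (I - {j}))) | j. j \<in> I}"

end

theory Submission
  imports Defs
begin

text \<open>
  Let \<open>p\<^sub>j = \<pi>(g\<^sub>j)\<close>. Since each \<open>p\<^sub>j\<close> has height at least \<open>\<epsilon>\<close> over the span of the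
  others, the \<open>p\<^sub>j\<close> have a dual family of norm at most \<open>1/\<epsilon>\<close>; completing both by a unit
  normal to biorthogonal bases shows that every \<open>Z \<in> \<Lambda>\<^sup>2\<close> is a sum \<open>\<Sum> w\<^sub>j \<and> p\<^sub>j\<close> with
  \<open>\<parallel>w\<^sub>j\<parallel> \<le> \<surd>2 \<parallel>Z\<parallel> / \<epsilon>\<close>. Conjugating a point \<open>X\<close> by the horizontal element \<open>(w, 0)\<close>
  multiplies it by the central element \<open>w \<and> \<pi>(X)\<close>. So one walks from \<open>g\<^sub>0\<close> to \<open>g\<^sub>1\<close>, \<open>g\<^sub>2\<close>, ...
  and, on arrival at \<open>g\<^sub>j\<close>, conjugates the path walked so far by \<open>(w\<^sub>j, 0)\<close>: this reaches
  \<open>Z * g\<^sub>n\<^sub>-\<^sub>1\<close> at an extra cost of \<open>2 \<Sum> \<parallel>w\<^sub>j\<parallel>\<^sub>s\<^sub>f = O(\<parallel>Z\<parallel> / \<epsilon>)\<close>.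
\<close>

section \<open>Exterior products and antisymmetric matrices\<close>

lemma wedge_add_left: "wedge (a + b) c = wedge a c + wedge b c"
  by (simp add: wedge_def vec_eq_iff algebra_simps)

lemma wedge_add_right: "wedge a (b + c) = wedge a b + wedge a c"
  by (simp add: wedge_def vec_eq_iff algebra_simps)

lemma wedge_scaleR_left: "wedge (r *\<^sub>R a) b = r *\<^sub>R wedge a b"
  by (simp add: wedge_def vec_eq_iff algebra_simps)

lemma wedge_scaleR_right: "wedge a (r *\<^sub>R b) = r *\<^sub>R wedge a b"
  by (simp add: wedge_def vec_eq_iff algebra_simps)

lemma wedge_minus_right: "wedge a (- b) = - wedge a b"
  by (simp add: wedge_def vec_eq_iff)

lemma wedge_zero [simp]: "wedge 0 b = 0" "wedge a 0 = 0"
  by (simp_all add: wedge_def vec_eq_iff)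

lemma wedge_self [simp]: "wedge a a = 0"
  by (simp add: wedge_def vec_eq_iff)

lemma wedge_commute: "wedge b a = - wedge a b"
  by (simp add: wedge_def vec_eq_iff)

lemma wedge_minus_left: "wedge (- a) b = - wedge a b"
  by (simp add: wedge_def vec_eq_iff)

lemma wedge_diff_left: "wedge (a - b) c = wedge a c - wedge b c"
  by (simp add: wedge_def vec_eq_iff algebra_simps)

lemma wedge_diff_right: "wedge a (b - c) = wedge a b - wedge a c"
  by (simp add: wedge_def vec_eq_iff algebra_simps)

lemma wedge_sum_left: "wedge (\<Sum>i\<in>S. f i) b = (\<Sum>i\<in>S. wedge (f i) b)"
  by (induction S rule: infinite_finite_induct)
    (simp_all add: wedge_add_left)

lemma bilinear_wedge: "bilinear wedge"
  unfolding bilinear_def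
  by (auto intro!: linearI simp: wedge_add_left wedge_add_right wedge_scaleR_left wedge_scaleR_right)

lemma wedge_mult_vector: "wedge v w *v x = (w \<bullet> x) *\<^sub>R v - (v \<bullet> x) *\<^sub>R w"
  by (simp add: vec_eq_iff wedge_def matrix_vector_mult_def inner_vec_def sum_subtractf
      sum_distrib_left algebra_simps)

lemma sum_mult_vector: "(\<Sum>j\<in>S. X j) *v x = (\<Sum>j\<in>S. X j *v x)"
  by (induction S rule: infinite_finite_induct) (auto simp: matrix_vector_mult_add_rdistrib)

lemma matrix_mult_congruence_sum_wedge:
  fixes B :: "real^'n^'n"
  shows "B ** (\<Sum>j\<in>S. wedge (a j) (b j)) ** transpose B = (\<Sum>j\<in>S. wedge (B *v a j) (B *v b j))"
proof (rule matrix_eq[THEN iffD2], rule allI)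
  fix x
  have adj: "v \<bullet> (x v* B) = (B *v v) \<bullet> x" for v
    by (simp add: inner_commute[of v "x v* B"] dot_lmul_matrix inner_commute[of x])
  have "(B ** (\<Sum>j\<in>S. wedge (a j) (b j)) ** transpose B) *v x
      = B *v (\<Sum>j\<in>S. (b j \<bullet> (transpose B *v x)) *\<^sub>R a j - (a j \<bullet> (transpose B *v x)) *\<^sub>R b j)"
    by (simp add: matrix_vector_mul_assoc[symmetric] sum_mult_vector wedge_mult_vector)
  also have "\<dots> = (\<Sum>j\<in>S. ((B *v b j) \<bullet> x) *\<^sub>R (B *v a j) - ((B *v a j) \<bullet> x) *\<^sub>R (B *v b j))"
    by (simp add: linear_sum[OF matrix_vector_mul_linear] o_def adj
        matrix_vector_mult_diff_distrib matrix_vector_mult_scaleR)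
  also have "\<dots> = (\<Sum>j\<in>S. wedge (B *v a j) (B *v b j)) *v x"
    by (simp add: sum_mult_vector wedge_mult_vector)
  finally show "(B ** (\<Sum>j\<in>S. wedge (a j) (b j)) ** transpose B) *v x
      = (\<Sum>j\<in>S. wedge (B *v a j) (B *v b j)) *v x" .
qed

lemma norm_matrix_vector_mult_le: "norm (M *v x) \<le> norm M * norm (x :: real^'n)"
proof -
  have "norm (M *v x) = L2_set (\<lambda>i. \<bar>M $ i \<bullet> x\<bar>) UNIV"
    by (simp add: norm_vec_def matrix_vector_mul_component)
  also have "\<dots> \<le> L2_set (\<lambda>i. norm x * norm (M $ i)) UNIV"
    by (rule L2_set_mono) (simp_all add: Cauchy_Schwarz_ineq2 mult.commute[of "norm x"])
  also have "\<dots> = norm M * norm x"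
    by (simp add: L2_set_right_distrib[symmetric] norm_vec_def)
  finally show ?thesis .
qed

lemma transpose_add: "transpose (X + Y) = transpose X + transpose Y"
  by (simp add: transpose_def vec_eq_iff)

lemma transpose_uminus: "transpose (- X) = - transpose X"
  by (simp add: transpose_def vec_eq_iff)

lemma antisym_mat_add: "antisym_mat X \<Longrightarrow> antisym_mat Y \<Longrightarrow> antisym_mat (X + Y)"
  unfolding antisym_mat_def by (simp add: transpose_add)

lemma antisym_mat_uminus: "antisym_mat X \<Longrightarrow> antisym_mat (- X)"
  unfolding antisym_mat_def by (simp add: transpose_uminus)

lemma antisym_mat_scaleR: "antisym_mat X \<Longrightarrow> antisym_mat (r *\<^sub>R X)"
  unfolding antisym_mat_def by (simp add: transpose_scalar)

lemma antisym_mat_wedge: "antisym_mat (wedge a b)"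
  unfolding antisym_mat_def wedge_def transpose_def by (simp add: vec_eq_iff)

lemma antisym_mat_zero: "antisym_mat 0"
  by (simp add: antisym_mat_def transpose_def vec_eq_iff)

lemma antisym_mat_sum_wedge: "antisym_mat (\<Sum>j\<in>S. wedge (a j) (b j))"
  by (induction S rule: infinite_finite_induct)
    (simp_all add: antisym_mat_zero antisym_mat_add antisym_mat_wedge)

lemma inner_mult_vector_antisym:
  assumes "antisym_mat M"
  shows "x \<bullet> (M *v y) = - ((M *v x) \<bullet> y)"
proof -
  have tM: "transpose M = - M"
    using assms by (simp add: antisym_mat_def)
  have "x \<bullet> (M *v y) = (transpose M *v x) \<bullet> y"
    by (simp add: dot_lmul_matrix)
  also have "transpose M *v x = - (M *v x)"
    unfolding tM by (simp add: vec_eq_iff matrix_vector_mult_def sum_negf)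
  finally show ?thesis
    by simp
qed

section \<open>Sub-Finsler norms\<close>

lemma is_norm_zero: "is_norm N \<Longrightarrow> N 0 = 0"
  unfolding is_norm_def by blast

lemma is_norm_uminus: "is_norm N \<Longrightarrow> N (- x) = N x"
  unfolding is_norm_def by (metis abs_minus_cancel abs_one mult_1 scaleR_minus1_left)

lemma is_norm_sum_le: "is_norm N \<Longrightarrow> N (\<Sum>i\<in>S. f i) \<le> (\<Sum>i\<in>S. N (f i))"
proof (induction S rule: infinite_finite_induct)
  case (insert a S)
  then have "N (f a + sum f S) \<le> N (f a) + N (sum f S)"
    unfolding is_norm_def by blast
  then show ?case
    using insert by simp
qed (simp_all add: is_norm_zero)

lemma is_norm_le_norm:
  assumes "is_norm N"
  obtains C where "C > 0" "\<And>x. N x \<le> C * norm x"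
proof
  define C where "C = (\<Sum>b\<in>Basis. N b) + 1"
  show "C > 0"
    using assms unfolding C_def is_norm_def by (simp add: add_nonneg_pos sum_nonneg)
  show "N x \<le> C * norm x" for x
  proof -
    have "N x = N (\<Sum>b\<in>Basis. (x \<bullet> b) *\<^sub>R b)"
      by (simp add: euclidean_representation)
    also have "\<dots> \<le> (\<Sum>b\<in>Basis. N ((x \<bullet> b) *\<^sub>R b))"
      by (rule is_norm_sum_le[OF assms])
    also have "\<dots> = (\<Sum>b\<in>Basis. \<bar>x \<bullet> b\<bar> * N b)"
      using assms by (simp add: is_norm_def)
    also have "\<dots> \<le> (\<Sum>b\<in>Basis. norm x * N b)"
      using assms unfolding is_norm_def
      by (intro sum_mono mult_right_mono) (simp_all add: Basis_le_norm)
    also have "\<dots> \<le> C * norm x"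
      by (simp add: C_def sum_distrib_left algebra_simps)
    finally show ?thesis .
  qed
qed

lemma is_norm_le_eunorm:
  assumes "is_norm N" and "invertible A"
  obtains C where "C > 0" "\<And>x. N x \<le> C * eunorm A x"
proof -
  obtain B where BA: "B ** A = mat 1"
    using assms(2) unfolding invertible_def by blast
  obtain C where C: "C > 0" "\<And>x. N x \<le> C * norm x"
    using is_norm_le_norm[OF assms(1)] by blast
  show thesis
  proof
    show "C * (norm B + 1) > 0"
      using C(1) by (simp add: add_nonneg_pos)
    fix x
    have "N x = N (B *v (A *v x))"
      by (simp add: matrix_vector_mul_assoc BA)
    also have "\<dots> \<le> C * (norm B * norm (A *v x))"
      using C(1) by (intro order_trans[OF C(2)] mult_left_mono norm_matrix_vector_mult_le) simp
    also have "\<dots> \<le> C * (norm B + 1) * eunorm A x"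
      using C(1) by (simp add: eunorm_def algebra_simps)
    finally show "N x \<le> C * (norm B + 1) * eunorm A x" .
  qed
qed

lemma is_norm_convex: "is_norm N \<Longrightarrow> convex_on UNIV N"
proof (rule convex_onI)
  fix t :: real and x y
  assume N: "is_norm N" and "0 < t" "t < 1"
  then have "N ((1 - t) *\<^sub>R x + t *\<^sub>R y) \<le> \<bar>1 - t\<bar> * N x + \<bar>t\<bar> * N y"
    unfolding is_norm_def by metis
  then show "N ((1 - t) *\<^sub>R x + t *\<^sub>R y) \<le> (1 - t) * N x + t * N y"
    using \<open>0 < t\<close> \<open>t < 1\<close> by simp
qed simp

lemma absolutely_integrable_is_norm_comp:
  assumes N: "is_norm N" and u: "u absolutely_integrable_on S" and S: "S \<in> sets lebesgue"
  shows "(\<lambda>t. N (u t)) absolutely_integrable_on S"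
proof -
  obtain C where C: "C > 0" "\<And>x. N x \<le> C * norm x"
    using is_norm_le_norm[OF N] by blast
  have "continuous_on UNIV N"
    by (rule convex_on_continuous[OF open_UNIV is_norm_convex[OF N]])
  then have "N \<in> borel_measurable borel"
    by (rule borel_measurable_continuous_onI)
  moreover have "u \<in> borel_measurable (lebesgue_on S)"
    using u S absolutely_integrable_measurable by blast
  ultimately have "(\<lambda>t. N (u t)) \<in> borel_measurable (lebesgue_on S)"
    using measurable_compose by blast
  moreover have "(\<lambda>t. C * norm (u t)) integrable_on S"
    using u by (simp add: absolutely_integrable_on_def integrable_on_mult_right)
  moreover have "norm (N (u t)) \<le> C * norm (u t)" for t
    using C(2)[of "u t"] N by (simp add: is_norm_def)
  ultimately show ?thesis
    using S by (blast intro: measurable_bounded_by_integrable_imp_absolutely_integrable)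
qed

section \<open>Wedge decompositions along families of large height\<close>

lemma biorthogonal_expansion:
  fixes a b :: "'i \<Rightarrow> 'a::euclidean_space"
  assumes J: "finite J" "card J = DIM('a)"
    and ab: "\<And>i j. i \<in> J \<Longrightarrow> j \<in> J \<Longrightarrow> a i \<bullet> b j = (if i = j then 1 else 0)"
  shows "x = (\<Sum>j\<in>J. (a j \<bullet> x) *\<^sub>R b j)"
proof -
  have coeff: "a i \<bullet> (\<Sum>j\<in>J. c j *\<^sub>R b j) = c i" if "i \<in> J" for i c
  proof -
    have "a i \<bullet> (\<Sum>j\<in>J. c j *\<^sub>R b j) = (\<Sum>j\<in>J. if i = j then c j else 0)"
      using that by (auto simp: inner_sum_right ab intro: sum.cong)
    then show ?thesis
      using that J(1) by simp
  qed
  have inj: "inj_on b J"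
    by (rule inj_onI) (metis ab one_neq_zero)
  have sum_image: "(\<Sum>v\<in>b ` J. c v *\<^sub>R v) = (\<Sum>j\<in>J. c (b j) *\<^sub>R b j)" for c
    by (simp add: sum.reindex[OF inj])
  have "independent (b ` J)"
  proof
    assume "dependent (b ` J)"
    then obtain c where c: "\<exists>v\<in>b ` J. c v \<noteq> 0" "(\<Sum>v\<in>b ` J. c v *\<^sub>R v) = 0"
      using dependent_finite[of "b ` J"] J(1) by blast
    have "c (b i) = 0" if "i \<in> J" for i
      using coeff[OF that, of "\<lambda>j. c (b j)"] c(2) by (simp add: sum_image)
    then show False
      using c(1) by blast
  qed
  moreover have "card (b ` J) = DIM('a)"
    using J(2) card_image[OF inj] by simp
  ultimately have "UNIV \<subseteq> span (b ` J)"
    by (intro card_ge_dim_independent) auto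
  then obtain c where "x = (\<Sum>v\<in>b ` J. c v *\<^sub>R v)"
    using span_finite[of "b ` J"] J(1) by blast
  then have x: "x = (\<Sum>j\<in>J. c (b j) *\<^sub>R b j)"
    by (simp add: sum_image)
  then have "a j \<bullet> x = c (b j)" if "j \<in> J" for j
    using coeff[OF that] by simp
  then show ?thesis
    using x by (simp cong: sum.cong)
qed

lemma antisym_eq_sum_wedge_biorthogonal:
  fixes M :: "real^'n^'n" and a b :: "'i \<Rightarrow> real^'n"
  assumes M: "antisym_mat M" and J: "finite J" "card J = CARD('n)"
    and ab: "\<And>i j. i \<in> J \<Longrightarrow> j \<in> J \<Longrightarrow> a i \<bullet> b j = (if i = j then 1 else 0)"
  shows "M = (\<Sum>j\<in>J. wedge ((1/2) *\<^sub>R (M *v a j)) (b j))"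
proof (rule matrix_eq[THEN iffD2], rule allI)
  fix y
  have dim: "card J = DIM(real^'n)"
    using J(2) by simp
  have ba: "\<And>i j. i \<in> J \<Longrightarrow> j \<in> J \<Longrightarrow> b i \<bullet> a j = (if i = j then 1 else 0)"
    using ab by (metis inner_commute)
  have "(\<Sum>j\<in>J. wedge ((1/2) *\<^sub>R (M *v a j)) (b j)) *v y
      = (1/2) *\<^sub>R (M *v (\<Sum>j\<in>J. (b j \<bullet> y) *\<^sub>R a j) + (\<Sum>j\<in>J. (a j \<bullet> (M *v y)) *\<^sub>R b j))"
    by (simp add: sum_mult_vector wedge_mult_vector inner_mult_vector_antisym[OF M, of _ y]
        linear_sum[OF matrix_vector_mul_linear] o_def matrix_vector_mult_scaleR
        sum_subtractf sum_negf scaleR_sum_right algebra_simps)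
  also have "\<dots> = M *v y"
    using biorthogonal_expansion[OF J(1) dim ab, of "M *v y"]
      biorthogonal_expansion[OF J(1) dim ba, of y]
    by (simp flip: scaleR_add_right)
  finally show "M *v y = (\<Sum>j\<in>J. wedge ((1/2) *\<^sub>R (M *v a j)) (b j)) *v y"
    by simp
qed

lemma dual_vector_exists:
  fixes q :: "'i \<Rightarrow> 'a::euclidean_space"
  assumes "j \<in> I" and "\<epsilon> > 0"
    and height: "\<And>t. t \<in> span (q ` (I - {j})) \<Longrightarrow> \<epsilon> \<le> norm (q j - t)"
  obtains d where "\<And>i. i \<in> I \<Longrightarrow> q i \<bullet> d = (if i = j then 1 else 0)"
    and "d \<in> span (q ` I)" and "norm d \<le> 1 / \<epsilon>"
proof -
  obtain y z where y: "y \<in> span (q ` (I - {j}))" and z: "\<And>t. t \<in> span (q ` (I - {j})) \<Longrightarrow> z \<bullet> t = 0"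
    and q: "q j = y + z"
    using orthogonal_subspace_decomp_exists[of "q ` (I - {j})" "q j"] unfolding orthogonal_def by blast
  have z_norm: "\<epsilon> \<le> norm z"
    using height[OF y] q by simp
  then have "z \<noteq> 0"
    using \<open>\<epsilon> > 0\<close> by auto
  show thesis
  proof
    show "q i \<bullet> (z /\<^sub>R (norm z)\<^sup>2) = (if i = j then 1 else 0)" if "i \<in> I" for i
    proof (cases "i = j")
      case True
      have "q j \<bullet> z = (norm z)\<^sup>2"
        using z[OF y] by (simp add: q inner_add_left inner_commute[of y] power2_norm_eq_inner)
      then show ?thesis
        using True \<open>z \<noteq> 0\<close> by simp
    next
      case False
      then have "q i \<in> span (q ` (I - {j}))"
        using that by (intro span_base) blast
      then show ?thesis
        using False z[of "q i"] by (simp add: inner_commute)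
    qed
    have "y \<in> span (q ` I)" "q j \<in> span (q ` I)"
      using y span_mono[of "q ` (I - {j})" "q ` I"] \<open>j \<in> I\<close> by (auto simp: span_base)
    then show "z /\<^sub>R (norm z)\<^sup>2 \<in> span (q ` I)"
      using q by (metis add_diff_cancel_left' span_diff span_scale)
    have "norm (z /\<^sub>R (norm z)\<^sup>2) = 1 / norm z"
      using \<open>z \<noteq> 0\<close> by (simp add: power2_eq_square field_simps)
    then show "norm (z /\<^sub>R (norm z)\<^sup>2) \<le> 1 / \<epsilon>"
      using z_norm \<open>\<epsilon> > 0\<close> by (simp add: frac_le)
  qed
qed

lemma dual_family_exists:
  fixes q :: "'i \<Rightarrow> 'a::euclidean_space"
  assumes "\<epsilon> > 0"
    and height: "\<And>j t. j \<in> I \<Longrightarrow> t \<in> span (q ` (I - {j})) \<Longrightarrow> \<epsilon> \<le> norm (q j - t)"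
  obtains d where "\<And>i j. i \<in> I \<Longrightarrow> j \<in> I \<Longrightarrow> q i \<bullet> d j = (if i = j then 1 else 0)"
    and "\<And>j. j \<in> I \<Longrightarrow> d j \<in> span (q ` I)"
    and "\<And>j. j \<in> I \<Longrightarrow> norm (d j) \<le> 1 / \<epsilon>"
proof -
  have "\<exists>d. (\<forall>i\<in>I. q i \<bullet> d = (if i = j then 1 else 0)) \<and> d \<in> span (q ` I) \<and> norm d \<le> 1 / \<epsilon>"
    if "j \<in> I" for j
    using dual_vector_exists[of j I \<epsilon> q] that \<open>\<epsilon> > 0\<close> height by metis
  then obtain d where "\<forall>j\<in>I. (\<forall>i\<in>I. q i \<bullet> d j = (if i = j then 1 else 0)) \<and>
      d j \<in> span (q ` I) \<and> norm (d j) \<le> 1 / \<epsilon>"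
    by metis
  then show thesis
    using that by blast
qed

lemma unit_normal_exists:
  fixes q :: "'i \<Rightarrow> 'a::euclidean_space"
  assumes "finite I" and "card I < DIM('a)"
  obtains \<nu> where "norm \<nu> = 1" and "\<And>y. y \<in> span (q ` I) \<Longrightarrow> y \<bullet> \<nu> = 0"
proof -
  have "dim (q ` I) < DIM('a)"
    using dim_le_card'[of "q ` I"] card_image_le[OF assms(1), of q] assms by simp
  then obtain \<nu>0 where "\<nu>0 \<noteq> 0" and \<nu>0: "\<And>y. y \<in> span (q ` I) \<Longrightarrow> orthogonal \<nu>0 y"
    using orthogonal_to_subspace_exists by blast
  show thesis
  proof
    show "norm (\<nu>0 /\<^sub>R norm \<nu>0) = 1"
      using \<open>\<nu>0 \<noteq> 0\<close> by simp
    show "y \<bullet> (\<nu>0 /\<^sub>R norm \<nu>0) = 0" if "y \<in> span (q ` I)" for y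
      using \<nu>0[OF that] by (simp add: orthogonal_def inner_commute)
  qed
qed

lemma antisym_eq_sum_wedge_hyperplane:
  fixes M :: "real^'n^'n" and q d :: "'i \<Rightarrow> real^'n"
  assumes M: "antisym_mat M" and I: "finite I" "card I + 1 = CARD('n)"
    and dq: "\<And>i j. i \<in> I \<Longrightarrow> j \<in> I \<Longrightarrow> d i \<bullet> q j = (if i = j then 1 else 0)"
    and \<nu>: "norm \<nu> = 1" "\<And>j. j \<in> I \<Longrightarrow> \<nu> \<bullet> q j = 0" "\<And>j. j \<in> I \<Longrightarrow> d j \<bullet> \<nu> = 0"
  shows "M = (\<Sum>j\<in>I. wedge ((1/2) *\<^sub>R (M *v d j) - ((1/2) * (d j \<bullet> (M *v \<nu>))) *\<^sub>R \<nu>) (q j))"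
proof -
  \<comment> \<open>Complete the biorthogonal system \<open>d, q\<close> on \<open>I\<close> by \<open>\<nu>\<close>, indexed by \<open>None\<close>.\<close>
  define J where "J = insert None (Some ` I)"
  define a where "a = case_option \<nu> d"
  define b where "b = case_option \<nu> q"
  have J: "finite J" "card J = CARD('n)"
    using I by (simp_all add: J_def card_image)
  have "\<nu> \<bullet> \<nu> = 1"
    using \<nu>(1) by (simp add: dot_square_norm)
  then have ab: "a i \<bullet> b j = (if i = j then 1 else 0)" if "i \<in> J" "j \<in> J" for i j
    using that dq \<nu> by (auto simp: J_def a_def b_def split: if_splits)
  have "M *v \<nu> = (\<Sum>j\<in>J. (a j \<bullet> (M *v \<nu>)) *\<^sub>R b j)"
    using biorthogonal_expansion[OF J(1) _ ab] J(2) by simp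
  also have "\<dots> = (\<Sum>j\<in>I. (d j \<bullet> (M *v \<nu>)) *\<^sub>R q j)"
    using inner_mult_vector_antisym[OF M, of \<nu> \<nu>]
    by (simp add: J_def I(1) sum.reindex a_def b_def inner_commute)
  finally have M\<nu>: "M *v \<nu> = (\<Sum>j\<in>I. (d j \<bullet> (M *v \<nu>)) *\<^sub>R q j)" .
  have "M = (\<Sum>j\<in>J. wedge ((1/2) *\<^sub>R (M *v a j)) (b j))"
    by (rule antisym_eq_sum_wedge_biorthogonal[OF M J ab])
  also have "\<dots> = wedge ((1/2) *\<^sub>R (M *v \<nu>)) \<nu> + (\<Sum>j\<in>I. wedge ((1/2) *\<^sub>R (M *v d j)) (q j))"
    by (simp add: J_def I(1) sum.reindex a_def b_def)
  also have "wedge ((1/2) *\<^sub>R (M *v \<nu>)) \<nu>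
      = (\<Sum>j\<in>I. wedge (- ((1/2) * (d j \<bullet> (M *v \<nu>))) *\<^sub>R \<nu>) (q j))"
    by (subst M\<nu>) (simp add: wedge_sum_left wedge_scaleR_left wedge_minus_left wedge_commute[of \<nu>]
        scaleR_sum_right)
  finally show ?thesis
    by (simp add: wedge_diff_left wedge_minus_left sum_subtractf sum_negf)
qed

lemma norm_hyperplane_coefficient_le:
  fixes M :: "real^'n^'n"
  assumes "norm \<nu> = 1"
  shows "norm ((1/2) *\<^sub>R (M *v d) - ((1/2) * (d \<bullet> (M *v \<nu>))) *\<^sub>R \<nu>) \<le> norm M * norm d"
proof -
  have "\<bar>d \<bullet> (M *v \<nu>)\<bar> \<le> norm d * norm (M *v \<nu>)"
    by (rule Cauchy_Schwarz_ineq2)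
  also have "\<dots> \<le> norm d * norm M"
    using norm_matrix_vector_mult_le[of M \<nu>] assms by (simp add: mult_left_mono)
  finally have "\<bar>d \<bullet> (M *v \<nu>)\<bar> \<le> norm M * norm d"
    by (simp add: mult.commute)
  moreover have "norm ((1/2) *\<^sub>R (M *v d) - ((1/2) * (d \<bullet> (M *v \<nu>))) *\<^sub>R \<nu>)
      \<le> (1/2) * norm (M *v d) + (1/2) * \<bar>d \<bullet> (M *v \<nu>)\<bar>"
    using norm_triangle_ineq4[of "(1/2) *\<^sub>R (M *v d)" "((1/2) * (d \<bullet> (M *v \<nu>))) *\<^sub>R \<nu>"]
    by (simp add: assms abs_mult)
  ultimately show ?thesis
    using norm_matrix_vector_mult_le[of M d] by linarith
qed

lemma antisym_wedge_decomposition: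
  fixes M :: "real^'n^'n" and q :: "'i \<Rightarrow> real^'n"
  assumes M: "antisym_mat M" and I: "finite I" "card I + 1 = CARD('n)" and "\<epsilon> > 0"
    and height: "\<And>j t. j \<in> I \<Longrightarrow> t \<in> span (q ` (I - {j})) \<Longrightarrow> \<epsilon> \<le> norm (q j - t)"
  obtains w where "M = (\<Sum>j\<in>I. wedge (w j) (q j))"
    and "\<And>j. j \<in> I \<Longrightarrow> norm (w j) \<le> norm M / \<epsilon>"
proof -
  obtain d where dq: "\<And>i j. i \<in> I \<Longrightarrow> j \<in> I \<Longrightarrow> q i \<bullet> d j = (if i = j then 1 else 0)"
    and d_span: "\<And>j. j \<in> I \<Longrightarrow> d j \<in> span (q ` I)"
    and d_norm: "\<And>j. j \<in> I \<Longrightarrow> norm (d j) \<le> 1 / \<epsilon>"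
    using dual_family_exists[of \<epsilon> I q, OF \<open>\<epsilon> > 0\<close>] height by blast
  have "card I < DIM(real^'n)"
    using I(2) by simp
  then obtain \<nu> where \<nu>: "norm \<nu> = 1" and \<nu>_orth: "\<And>y. y \<in> span (q ` I) \<Longrightarrow> y \<bullet> \<nu> = 0"
    using unit_normal_exists[OF I(1), of q] by blast
  define w where "w j = (1/2) *\<^sub>R (M *v d j) - ((1/2) * (d j \<bullet> (M *v \<nu>))) *\<^sub>R \<nu>" for j
  have "M = (\<Sum>j\<in>I. wedge (w j) (q j))"
    unfolding w_def
  proof (rule antisym_eq_sum_wedge_hyperplane[OF M I _ \<nu>])
    show "d i \<bullet> q j = (if i = j then 1 else 0)" if "i \<in> I" "j \<in> I" for i j
      using dq[OF that(2,1)] by (simp add: inner_commute)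
    show "\<nu> \<bullet> q j = 0" if "j \<in> I" for j
      using \<nu>_orth[of "q j"] that by (simp add: span_base inner_commute)
    show "d j \<bullet> \<nu> = 0" if "j \<in> I" for j
      using \<nu>_orth d_span that by blast
  qed
  moreover have "norm (w j) \<le> norm M / \<epsilon>" if "j \<in> I" for j
  proof -
    have "norm (w j) \<le> norm M * norm (d j)"
      unfolding w_def by (rule norm_hyperplane_coefficient_le[OF \<nu>])
    also have "\<dots> \<le> norm M / \<epsilon>"
      using mult_left_mono[OF d_norm[OF that], of "norm M"] by simp
    finally show ?thesis .
  qed
  ultimately show ?thesis
    using that by blast
qed

lemma MinHeight_le_dist_span:
  assumes "finite I" "j \<in> I" "t \<in> span ((\<lambda>i. A *v p i) ` (I - {j}))"
  shows "MinHeight A p I \<le> norm (A *v p j - t)"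
proof -
  have "span ((\<lambda>i. A *v p i) ` (I - {j})) = (*v) A ` span (p ` (I - {j}))"
    unfolding image_image[symmetric] by (rule span_linear_image) simp
  then obtain s where s: "s \<in> span (p ` (I - {j}))" "t = A *v s"
    using assms(3) by blast
  have "MinHeight A p I \<le> eudist_set A (p j) (span (p ` (I - {j})))"
    unfolding MinHeight_def using assms(1,2) by (intro Min_le) auto
  also have "\<dots> \<le> eunorm A (p j - s)"
    unfolding eudist_set_def using s(1)
    by (intro cInf_lower) (auto intro!: bdd_belowI[of _ 0] simp: eunorm_def)
  finally show ?thesis
    by (simp add: eunorm_def s(2) matrix_vector_mult_diff_distrib)
qed

lemma antisym_mat_congruence:
  fixes A Z :: "real^'n^'n"
  assumes "antisym_mat Z"
  shows "antisym_mat (A ** Z ** transpose A)"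
proof -
  have neg: "X ** (- Y) = - (X ** Y)" "(- Y) ** X = - (Y ** X)" for X Y :: "real^'n^'n"
    by (simp_all add: matrix_matrix_mult_def vec_eq_iff sum_negf)
  have "transpose (A ** Z ** transpose A) = A ** transpose Z ** transpose A"
    by (simp add: matrix_transpose_mul matrix_mul_assoc)
  also have "\<dots> = - (A ** Z ** transpose A)"
    using assms by (simp add: antisym_mat_def neg)
  finally show ?thesis
    unfolding antisym_mat_def .
qed

text \<open>The Euclidean structure of \<open>A\<close> is transported to the standard one by \<open>x \<mapsto> A x\<close>,
  under which \<open>Z\<close> becomes \<open>A Z A\<^sup>T\<close>.\<close>

lemma bounded_wedge_decomposition:
  fixes A Z :: "real^'n^'n" and p :: "nat \<Rightarrow> real^'n"
  assumes A: "invertible A" and Z: "antisym_mat Z"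
    and I: "finite I" "card I + 1 = CARD('n)" and "\<epsilon> > 0" and height: "\<epsilon> \<le> MinHeight A p I"
  obtains w where "Z = (\<Sum>j\<in>I. wedge (w j) (p j))"
    and "\<And>j. j \<in> I \<Longrightarrow> eunorm A (w j) \<le> sqrt 2 * eunorm2 A Z / \<epsilon>"
proof -
  obtain B where AB: "A ** B = mat 1" and BA: "B ** A = mat 1"
    using A unfolding invertible_def by blast
  define M where "M = A ** Z ** transpose A"
  have "\<epsilon> \<le> norm (A *v p j - t)" if "j \<in> I" "t \<in> span ((\<lambda>i. A *v p i) ` (I - {j}))" for j t
    using MinHeight_le_dist_span[OF I(1) that] height by linarith
  then obtain w where M: "M = (\<Sum>j\<in>I. wedge (w j) (A *v p j))"
    and w: "\<And>j. j \<in> I \<Longrightarrow> norm (w j) \<le> norm M / \<epsilon>"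
    using antisym_wedge_decomposition[of M I \<epsilon> "\<lambda>j. A *v p j"] antisym_mat_congruence[OF Z, of A]
      I \<open>\<epsilon> > 0\<close> unfolding M_def by blast
  show ?thesis
  proof
    have "transpose A ** transpose B = mat 1"
      using BA by (metis matrix_transpose_mul transpose_mat)
    then have "Z = B ** M ** transpose B"
      by (simp add: M_def matrix_mul_assoc BA flip: matrix_mul_assoc[of Z])
    then show "Z = (\<Sum>j\<in>I. wedge (B *v w j) (p j))"
      by (simp add: M matrix_mult_congruence_sum_wedge matrix_vector_mul_assoc BA)
    show "eunorm A (B *v w j) \<le> sqrt 2 * eunorm2 A Z / \<epsilon>" if "j \<in> I" for j
      using w[OF that] by (simp add: eunorm_def eunorm2_def M_def matrix_vector_mul_assoc AB)
  qed
qed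

lemma is_norm_wedge_decomposition:
  fixes N :: "real^'n \<Rightarrow> real" and A :: "real^'n^'n"
  assumes "is_norm N" and "invertible A"
  obtains K where "K > 0"
    and "\<And>(Z :: real^'n^'n) I \<epsilon> p. antisym_mat Z \<Longrightarrow> finite I \<Longrightarrow>
      card I + 1 = CARD('n) \<Longrightarrow> \<epsilon> > 0 \<Longrightarrow> \<epsilon> \<le> MinHeight A p I \<Longrightarrow>
      \<exists>w. Z = (\<Sum>j\<in>I. wedge (w j) (p j)) \<and> (\<forall>j\<in>I. N (w j) \<le> K * eunorm2 A Z / \<epsilon>)"
proof -
  obtain C where C: "C > 0" "\<And>x. N x \<le> C * eunorm A x"
    using is_norm_le_eunorm[OF assms] by blast
  show thesis
  proof (rule that)
    show "C * sqrt 2 > 0"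
      using C(1) by simp
    fix Z :: "real^'n^'n" and I \<epsilon> p
    assume "antisym_mat Z" "finite I" "card I + 1 = CARD('n)" "\<epsilon> > 0" "\<epsilon> \<le> MinHeight A p I"
    then obtain w where "Z = (\<Sum>j\<in>I. wedge (w j) (p j))"
      and w: "\<And>j. j \<in> I \<Longrightarrow> eunorm A (w j) \<le> sqrt 2 * eunorm2 A Z / \<epsilon>"
      using bounded_wedge_decomposition[OF assms(2)] by blast
    moreover have "N (w j) \<le> C * sqrt 2 * eunorm2 A Z / \<epsilon>" if "j \<in> I" for j
      using C(2)[of "w j"] mult_left_mono[OF w[OF that], of C] C(1) by simp
    ultimately show "\<exists>w. Z = (\<Sum>j\<in>I. wedge (w j) (p j)) \<and>
        (\<forall>j\<in>I. N (w j) \<le> C * sqrt 2 * eunorm2 A Z / \<epsilon>)"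
      by blast
  qed
qed

section \<open>The group law\<close>

lemma gmult_assoc: "gmult (gmult p q) r = gmult p (gmult q r)"
  by (simp add: gmult_def wedge_add_left wedge_add_right scaleR_add_right)

lemma gmult_gzero_left [simp]: "gmult gzero g = g"
  by (simp add: gmult_def gzero_def)

lemma fst_gmult: "fst (gmult p q) = fst p + fst q"
  by (simp add: gmult_def)

lemma gmult_central: "gmult (0, Y) (gmult (0, Y') g) = gmult (0, Y + Y') g"
  by (simp add: gmult_def)

lemma gmult_conj_horizontal: "gmult (gmult (w, 0) X) (- w, 0) = gmult (0, wedge w (fst X)) X"
  by (simp add: gmult_def wedge_add_left wedge_minus_right wedge_commute[of "fst X" w]
      scaleR_add_right)

definition ginv :: "('n::finite) carnot \<Rightarrow> 'n carnot" where
  "ginv p = (- fst p, - snd p)"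

lemma gmult_ginv_cancel_left: "gmult (ginv p) (gmult p q) = q"
  by (simp add: gmult_def ginv_def wedge_add_right wedge_minus_left scaleR_add_right)

lemma gmult_ginv_cancel_right: "gmult p (gmult (ginv p) q) = q"
  by (simp add: gmult_def ginv_def wedge_diff_right wedge_minus_left scaleR_diff_right)

lemma gmult_eq_iff: "gmult p x = q \<longleftrightarrow> x = gmult (ginv p) q"
  using gmult_ginv_cancel_left gmult_ginv_cancel_right by metis

lemma in_G_gmult: "in_G p \<Longrightarrow> in_G q \<Longrightarrow> in_G (gmult p q)"
  unfolding in_G_def gmult_def snd_conv by (intro antisym_mat_add antisym_mat_scaleR antisym_mat_wedge)

lemma in_G_ginv: "in_G p \<Longrightarrow> in_G (ginv p)"
  unfolding in_G_def ginv_def snd_conv by (rule antisym_mat_uminus)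

lemma gmult_conj_chain_step:
  "gmult (gmult (gmult (w, 0) (gmult (0, Z) g)) (gmult (ginv g) g')) (- w, 0)
    = gmult (0, Z + wedge w (fst g')) g'"
proof -
  have "gmult (gmult (gmult (w, 0) (gmult (0, Z) g)) (gmult (ginv g) g')) (- w, 0)
      = gmult (gmult (w, 0) (gmult (0, Z) g')) (- w, 0)"
    by (simp only: gmult_assoc gmult_ginv_cancel_right)
  also have "\<dots> = gmult (0, wedge w (fst g')) (gmult (0, Z) g')"
    by (simp add: gmult_conj_horizontal fst_gmult)
  finally show ?thesis
    by (simp add: gmult_central add.commute)
qed

section \<open>Concatenation of controls\<close>

definition ctrl_join :: "(real \<Rightarrow> 'a::real_vector) \<Rightarrow> (real \<Rightarrow> 'a) \<Rightarrow> real \<Rightarrow> 'a" where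
  "ctrl_join u v t = (if t \<le> 1/2 then 2 *\<^sub>R u (2 * t) else 2 *\<^sub>R v (2 * t - 1))"

lemma has_integral_double_speed:
  fixes f :: "real \<Rightarrow> 'a::banach"
  assumes "(f has_integral I) {a..b}"
  shows "((\<lambda>t. 2 *\<^sub>R f (2 * t - c)) has_integral I) {(a + c) / 2..(b + c) / 2}"
proof -
  have "((\<lambda>t. f (2 *\<^sub>R t + - c)) has_integral I /\<^sub>R 2 ^ DIM(real))
      (cbox ((a - - c) /\<^sub>R 2) ((b - - c) /\<^sub>R 2))"
    using has_integral_affinity'[of f I a b 2 "- c"] assms by simp
  then have "((\<lambda>t. f (2 * t - c)) has_integral I /\<^sub>R 2) {(a + c) / 2..(b + c) / 2}"
    by simp
  from has_integral_cmul[OF this, of 2] show ?thesis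
    by simp
qed

lemma has_integral_ctrl_join_left:
  fixes f g :: "real \<Rightarrow> 'a::banach"
  assumes "s \<le> 1/2" and "(f has_integral I) {0..2 * s}"
  shows "(ctrl_join f g has_integral I) {0..s}"
proof (rule has_integral_eq)
  show "((\<lambda>t. 2 *\<^sub>R f (2 * t - 0)) has_integral I) {0..s}"
    using has_integral_double_speed[OF assms(2), of 0] by simp
  show "2 *\<^sub>R f (2 * t - 0) = ctrl_join f g t" if "t \<in> {0..s}" for t
    using that assms(1) by (simp add: ctrl_join_def)
qed

lemma has_integral_ctrl_join_right:
  fixes f g :: "real \<Rightarrow> 'a::banach"
  assumes "1/2 \<le> s" and "(f has_integral I) {0..1}" and "(g has_integral J) {0..2 * s - 1}"
  shows "(ctrl_join f g has_integral I + J) {0..s}"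
proof -
  have first: "(ctrl_join f g has_integral I) {0..1/2}"
    using has_integral_ctrl_join_left[of "1/2" f I] assms(2) by simp
  have second: "(ctrl_join f g has_integral J) {1/2..s}"
  proof (rule has_integral_spike_finite)
    show "((\<lambda>t. 2 *\<^sub>R g (2 * t - 1)) has_integral J) {1/2..s}"
      using has_integral_double_speed[OF assms(3), of 1] by simp
    show "ctrl_join f g t = 2 *\<^sub>R g (2 * t - 1)" if "t \<in> {1/2..s} - {1/2}" for t
      using that by (simp add: ctrl_join_def)
  qed simp
  show ?thesis
    using has_integral_combine[OF _ assms(1) first second] by simp
qed

lemma has_integral_ctrl_join:
  fixes f g :: "real \<Rightarrow> 'a::banach"
  shows "(f has_integral I) {0..1} \<Longrightarrow> (g has_integral J) {0..1} \<Longrightarrow>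
    (ctrl_join f g has_integral I + J) {0..1}"
  using has_integral_ctrl_join_right[of 1 f I g J] by simp

lemma ctrl_join_comp_homogeneous:
  fixes h :: "'a::real_vector \<Rightarrow> real"
  assumes "\<And>x. h (2 *\<^sub>R x) = 2 * h x"
  shows "(\<lambda>t. h (ctrl_join u v t)) = ctrl_join (\<lambda>t. h (u t)) (\<lambda>t. h (v t))"
  by (simp add: ctrl_join_def assms fun_eq_iff)

lemma absolutely_integrable_ctrl_join:
  fixes u v :: "real \<Rightarrow> 'a::euclidean_space"
  assumes "u absolutely_integrable_on {0..1}" and "v absolutely_integrable_on {0..1}"
  shows "ctrl_join u v absolutely_integrable_on {0..1}"
proof -
  have "(\<lambda>t. norm (ctrl_join u v t)) = ctrl_join (\<lambda>t. norm (u t)) (\<lambda>t. norm (v t))"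
    by (rule ctrl_join_comp_homogeneous) simp
  then show ?thesis
    using assms unfolding absolutely_integrable_on_def integrable_on_def
    by (metis has_integral_ctrl_join)
qed

lemma integral_is_norm_ctrl_join:
  assumes N: "is_norm N"
    and u: "u absolutely_integrable_on {0..1}" and v: "v absolutely_integrable_on {0..1}"
  shows "integral {0..1} (\<lambda>t. N (ctrl_join u v t))
    = integral {0..1} (\<lambda>t. N (u t)) + integral {0..1} (\<lambda>t. N (v t))"
proof -
  have "(\<lambda>t. N (ctrl_join u v t)) = ctrl_join (\<lambda>t. N (u t)) (\<lambda>t. N (v t))"
    by (rule ctrl_join_comp_homogeneous) (use N in \<open>simp add: is_norm_def\<close>)
  moreover have "(\<lambda>t. N (u t)) integrable_on {0..1}" "(\<lambda>t. N (v t)) integrable_on {0..1}"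
    using absolutely_integrable_is_norm_comp[OF N u] absolutely_integrable_is_norm_comp[OF N v]
    by (simp_all add: absolutely_integrable_on_def)
  ultimately show ?thesis
    by (simp add: integral_unique[OF has_integral_ctrl_join] integrable_integral)
qed

lemma absolutely_integrable_area_integrand:
  fixes u :: "real \<Rightarrow> real^'n"
  assumes "u absolutely_integrable_on {0..1}"
  shows "(\<lambda>t. wedge (integral {0..t} u) (u t)) absolutely_integrable_on {0..1}"
proof -
  have "continuous_on {0..1} (\<lambda>t. integral {0..t} u)"
    by (rule indefinite_integral_continuous_1)
      (use assms set_lebesgue_integral_eq_integral(1) in blast)
  then show ?thesis
    by (intro absolutely_integrable_bounded_measurable_product[OF bilinear_wedge _ _ _ assms]
        continuous_imp_measurable_on_sets_lebesgue compact_imp_bounded compact_continuous_image)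
      auto
qed

lemma integral_upto_ctrl_join:
  fixes u v :: "real \<Rightarrow> 'a::banach"
  assumes u: "u integrable_on {0..1}" and v: "v integrable_on {0..1}" and "t \<le> 1"
  shows "integral {0..t} (ctrl_join u v) = (if t \<le> 1/2 then integral {0..2 * t} u
    else integral {0..1} u + integral {0..2 * t - 1} v)"
proof -
  have U: "(u has_integral integral {0..s} u) {0..s}" and V: "(v has_integral integral {0..s} v) {0..s}"
    if "s \<le> 1" for s
    using u v that by (auto intro!: integrable_integral integrable_on_subinterval)
  show ?thesis
  proof (cases "t \<le> 1/2")
    case True
    then show ?thesis
      using has_integral_ctrl_join_left[OF True U, of v] by (simp add: integral_unique)
  next
    case False
    then show ?thesis
      using has_integral_ctrl_join_right[OF _ U V, of t] \<open>t \<le> 1\<close> by (simp add: integral_unique)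
  qed
qed

lemma hend_ctrl_join:
  fixes u v :: "real \<Rightarrow> real^'n"
  assumes u: "u absolutely_integrable_on {0..1}" and v: "v absolutely_integrable_on {0..1}"
  shows "hend (ctrl_join u v) = gmult (hend u) (hend v)"
proof -
  define U where "U t = integral {0..t} u" for t
  define V where "V t = integral {0..t} v" for t
  define area_u where "area_u = (\<lambda>t. wedge (U t) (u t))"
  define area_v where "area_v = (\<lambda>t. wedge (V t) (v t))"
  have uv: "u integrable_on {0..1}" "v integrable_on {0..1}"
    using u v set_lebesgue_integral_eq_integral(1) by blast+
  have area: "(area_u has_integral integral {0..1} area_u) {0..1}"
      "(area_v has_integral integral {0..1} area_v) {0..1}"
    using absolutely_integrable_area_integrand[OF u] absolutely_integrable_area_integrand[OF v]
      set_lebesgue_integral_eq_integral(1)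
    unfolding area_u_def area_v_def U_def V_def by (blast intro: integrable_integral)+
  \<comment> \<open>On the second half the running integral is \<open>U 1 + V (2 t - 1)\<close>, whence the cross term.\<close>
  have cross: "((\<lambda>t. wedge (U 1) (v t)) has_integral wedge (U 1) (V 1)) {0..1}"
    using has_integral_linear[OF integrable_integral[OF uv(2)] bounded_bilinear.bounded_linear_right,
        OF bilinear_conv_bounded_bilinear[THEN iffD1, OF bilinear_wedge]]
    by (simp add: o_def V_def)
  have "((\<lambda>t. wedge (integral {0..t} (ctrl_join u v)) (ctrl_join u v t)) has_integral
      integral {0..1} area_u + (wedge (U 1) (V 1) + integral {0..1} area_v)) {0..1}"
  proof (rule has_integral_eq)
    show "(ctrl_join area_u (\<lambda>t. wedge (U 1) (v t) + area_v t) has_integral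
        integral {0..1} area_u + (wedge (U 1) (V 1) + integral {0..1} area_v)) {0..1}"
      using area cross by (intro has_integral_ctrl_join has_integral_add) auto
    show "ctrl_join area_u (\<lambda>t. wedge (U 1) (v t) + area_v t) t
        = wedge (integral {0..t} (ctrl_join u v)) (ctrl_join u v t)" if "t \<in> {0..1}" for t
      using that integral_upto_ctrl_join[OF uv, of t]
      by (simp add: ctrl_join_def area_u_def area_v_def U_def V_def wedge_scaleR_right wedge_add_left)
  qed
  then have "integral {0..1} (\<lambda>t. wedge (integral {0..t} (ctrl_join u v)) (ctrl_join u v t))
      = integral {0..1} area_u + (wedge (U 1) (V 1) + integral {0..1} area_v)"
    by (rule integral_unique)
  moreover have "integral {0..1} (ctrl_join u v) = U 1 + V 1"
    using integral_upto_ctrl_join[OF uv, of 1] by (simp add: U_def V_def)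
  ultimately show ?thesis
    unfolding hend_def gmult_def
    by (simp add: U_def V_def area_u_def area_v_def algebra_simps)
qed

section \<open>The Carnot-Caratheodory norm\<close>

definition reachable :: "('n::finite) carnot \<Rightarrow> bool" where
  "reachable h \<longleftrightarrow> (\<exists>u. u absolutely_integrable_on {0..1} \<and> hend u = h)"

lemma hend_const: "hend (\<lambda>t. v) = (v, 0)"
  by (simp add: hend_def integral_const_real wedge_scaleR_left)

lemma reachable_horizontal: "reachable (v, 0)"
  unfolding reachable_def by (intro exI[of _ "\<lambda>t. v"]) (simp add: hend_const)

lemma reachable_gmult:
  assumes "reachable h" and "reachable h'"
  shows "reachable (gmult h h')"
proof -
  obtain u v where "u absolutely_integrable_on {0..1}" "hend u = h"
    and "v absolutely_integrable_on {0..1}" "hend v = h'"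
    using assms unfolding reachable_def by blast
  then show ?thesis
    unfolding reachable_def
    by (intro exI[of _ "ctrl_join u v"]) (simp add: absolutely_integrable_ctrl_join hend_ctrl_join)
qed

lemma reachable_central_wedge: "reachable (0, wedge a b)"
proof -
  have "gmult (gmult (gmult (a, 0) (b, 0)) (- a, 0)) (- b, 0) = (0, wedge a b)"
    by (simp add: gmult_def wedge_minus_right wedge_add_left wedge_commute[of b a]
        flip: scaleR_add_left)
  moreover have "reachable (gmult (gmult (gmult (a, 0) (b, 0)) (- a, 0)) (- b, 0))"
    by (intro reachable_gmult reachable_horizontal)
  ultimately show ?thesis
    by simp
qed

lemma reachable_central_sum_wedge: "reachable (0, \<Sum>j\<in>S. wedge (a j) (b j))"
proof (induction S rule: infinite_finite_induct)
  case (insert j S)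
  then show ?case
    using reachable_gmult[OF reachable_central_wedge[of "a j" "b j"] insert.IH]
    by (simp add: gmult_def)
qed (use reachable_horizontal[of 0] in simp_all)

text \<open>Chow connectivity of \<open>G\<close>; it makes the infima defining \<open>dcc\<close> range over nonempty sets.\<close>

lemma reachable_if_in_G:
  assumes "in_G h"
  shows "reachable h"
proof -
  have Y: "snd h = (\<Sum>b\<in>Basis. wedge ((1/2) *\<^sub>R (snd h *v b)) b)"
    using assms unfolding in_G_def
    by (rule antisym_eq_sum_wedge_biorthogonal) (simp_all add: inner_Basis)
  have "reachable (gmult (fst h, 0) (0, snd h))"
    by (subst Y) (intro reachable_gmult reachable_horizontal reachable_central_sum_wedge)
  then show ?thesis
    by (simp add: gmult_def)
qed

definition cc_norm :: "(real^('n::finite) \<Rightarrow> real) \<Rightarrow> 'n carnot \<Rightarrow> real" where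
  "cc_norm N h = dcc N gzero h"

lemma cc_norm_eq_Inf:
  "cc_norm N h = Inf {integral {0..1} (\<lambda>t. N (u t)) | u. u absolutely_integrable_on {0..1} \<and> hend u = h}"
  by (simp add: cc_norm_def dcc_def)

lemma dcc_eq_cc_norm: "dcc N p q = cc_norm N (gmult (ginv p) q)"
  by (simp add: dcc_def cc_norm_eq_Inf gmult_eq_iff)

lemma cc_norm_le_length:
  fixes N :: "real^'n \<Rightarrow> real"
  assumes N: "is_norm N" and u: "u absolutely_integrable_on {0..1}"
  shows "cc_norm N (hend u) \<le> integral {0..1} (\<lambda>t. N (u t))"
proof -
  have "0 \<le> integral {0..1} (\<lambda>t. N (v t))"
    if "v absolutely_integrable_on {0..1}" for v :: "real \<Rightarrow> real^'n"
  proof (rule integral_nonneg)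
    show "(\<lambda>t. N (v t)) integrable_on {0..1}"
      using absolutely_integrable_is_norm_comp[OF N that] by (simp add: absolutely_integrable_on_def)
  qed (use N in \<open>simp add: is_norm_def\<close>)
  then show ?thesis
    unfolding cc_norm_eq_Inf using u by (intro cInf_lower) (auto intro!: bdd_belowI[of _ 0])
qed

lemma cc_norm_greatest:
  assumes "reachable h"
    and "\<And>u. u absolutely_integrable_on {0..1} \<Longrightarrow> hend u = h \<Longrightarrow> c \<le> integral {0..1} (\<lambda>t. N (u t))"
  shows "c \<le> cc_norm N h"
  unfolding cc_norm_eq_Inf using assms unfolding reachable_def
  by (intro cInf_greatest) auto

lemma cc_norm_horizontal_le: "is_norm N \<Longrightarrow> cc_norm N (v, 0) \<le> N v"
  using cc_norm_le_length[of N "\<lambda>t. v"] by (simp add: hend_const)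

lemma cc_norm_gmult_le:
  assumes N: "is_norm N" and h: "reachable h" and h': "reachable h'"
  shows "cc_norm N (gmult h h') \<le> cc_norm N h + cc_norm N h'"
proof -
  let ?len = "\<lambda>u. integral {0..1} (\<lambda>t. N (u t))"
  have "cc_norm N (gmult h h') - ?len v \<le> cc_norm N h"
    if v: "v absolutely_integrable_on {0..1}" "hend v = h'" for v
  proof (rule cc_norm_greatest[OF h])
    fix u
    assume u: "u absolutely_integrable_on {0..1}" "hend u = h"
    have "cc_norm N (gmult h h') \<le> ?len (ctrl_join u v)"
      using cc_norm_le_length[OF N absolutely_integrable_ctrl_join[OF u(1) v(1)]]
      by (simp add: hend_ctrl_join u v)
    then show "cc_norm N (gmult h h') - ?len v \<le> ?len u"
      using integral_is_norm_ctrl_join[OF N u(1) v(1)] by simp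
  qed
  then have "cc_norm N (gmult h h') - cc_norm N h \<le> cc_norm N h'"
    by (intro cc_norm_greatest[OF h']) (auto simp: algebra_simps)
  then show ?thesis
    by simp
qed

lemma cc_norm_chain_le:
  fixes g :: "nat \<Rightarrow> ('n::finite) carnot"
  assumes N: "is_norm N" and G: "\<And>j. j \<le> k \<Longrightarrow> in_G (g j)"
  shows "cc_norm N (gmult (0, \<Sum>j=1..k. wedge (w j) (fst (g j))) (g k))
    \<le> cc_norm N (g 0) + (\<Sum>j=1..k. dcc N (g (j - 1)) (g j) + 2 * N (w j))"
  using G
proof (induction k)
  case 0
  then show ?case
    by (simp add: gmult_def)
next
  case (Suc k)
  let ?Z = "\<Sum>j=1..k. wedge (w j) (fst (g j))"
  let ?X = "gmult (0, ?Z) (g k)"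
  let ?h = "gmult (ginv (g k)) (g (Suc k))"
  let ?w = "w (Suc k)"
  have G: "in_G (g k)" "in_G (g (Suc k))"
    using Suc.prems by simp_all
  have X: "in_G ?X"
    using G(1) by (intro in_G_gmult) (simp_all add: in_G_def antisym_mat_sum_wedge)
  have h: "in_G ?h"
    using G by (intro in_G_gmult in_G_ginv)
  have w: "in_G (v, 0)" for v
    by (simp add: in_G_def antisym_mat_zero)
  have conj: "gmult (gmult (gmult (?w, 0) ?X) ?h) (- ?w, 0)
      = gmult (0, \<Sum>j=1..Suc k. wedge (w j) (fst (g j))) (g (Suc k))"
    by (simp add: gmult_conj_chain_step)
  have sub: "cc_norm N (gmult a b) \<le> cc_norm N a + cc_norm N b" if "in_G a" "in_G b" for a b
    using cc_norm_gmult_le[OF N] reachable_if_in_G that by blast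
  have "cc_norm N (gmult (0, \<Sum>j=1..Suc k. wedge (w j) (fst (g j))) (g (Suc k)))
      \<le> cc_norm N (?w, 0) + cc_norm N ?X + cc_norm N ?h + cc_norm N (- ?w, 0)"
    using sub[OF w[of ?w] X] sub[OF in_G_gmult[OF w[of ?w] X] h]
      sub[OF in_G_gmult[OF in_G_gmult[OF w[of ?w] X] h] w[of "- ?w"]]
    unfolding conj[symmetric] by linarith
  also have "\<dots> \<le> N ?w + cc_norm N ?X + cc_norm N ?h + N (- ?w)"
    using cc_norm_horizontal_le[OF N, of ?w] cc_norm_horizontal_le[OF N, of "- ?w"] by linarith
  also have "\<dots> \<le> cc_norm N (g 0) + (\<Sum>j=1..Suc k. dcc N (g (j - 1)) (g j) + 2 * N (w j))"
    using Suc by (simp add: dcc_eq_cc_norm is_norm_uminus[OF N])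
  finally show ?case .
qed

lemma dcc_wedge_chain_le:
  fixes g :: "nat \<Rightarrow> ('n::finite) carnot"
  assumes N: "is_norm N" and "g 0 = gzero" and "\<And>j. j \<le> k \<Longrightarrow> in_G (g j)"
  shows "dcc N (g 0) (gmult (0, \<Sum>j=1..k. wedge (w j) (fst (g j))) (g k))
    \<le> (\<Sum>j=1..k. dcc N (g (j - 1)) (g j)) + 2 * (\<Sum>j=1..k. N (w j))"
proof -
  have "cc_norm N (g 0) \<le> 0"
    using cc_norm_horizontal_le[OF N, of 0] assms(2) by (simp add: gzero_def is_norm_zero[OF N])
  then show ?thesis
    using cc_norm_chain_le[OF N, of k g w] assms(2,3)
    by (simp add: cc_norm_def sum.distrib sum_distrib_left)
qed

theorem mainTheorem10:
  fixes N :: "real^'n \<Rightarrow> real" and A :: "real^'n^'n"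
  assumes "CARD('n) \<ge> 2" and "is_norm N" and "invertible A"
  shows "\<exists>K2>0. \<forall>\<epsilon>>0. \<forall>(Z::real^'n^'n) (g::nat \<Rightarrow> 'n carnot).
           antisym_mat Z \<longrightarrow> (\<forall>j<CARD('n). in_G (g j)) \<longrightarrow> g 0 = gzero \<longrightarrow>
           MinHeight A (\<lambda>j. proj (g j)) {1..<CARD('n)} \<ge> \<epsilon> \<longrightarrow>
           dcc N (g 0) (gmult (0, Z) (g (CARD('n) - 1)))
             \<le> K2 * eunorm2 A Z / \<epsilon> + (\<Sum>j=1..CARD('n)-1. dcc N (g (j-1)) (g j))"
proof -
  obtain K where "K > 0" and decomposition: "\<And>Z I \<epsilon> p. antisym_mat Z \<Longrightarrow> finite I \<Longrightarrow>
      card I + 1 = CARD('n) \<Longrightarrow> \<epsilon> > 0 \<Longrightarrow> \<epsilon> \<le> MinHeight A p I \<Longrightarrow>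
      \<exists>w. Z = (\<Sum>j\<in>I. wedge (w j) (p j)) \<and> (\<forall>j\<in>I. N (w j) \<le> K * eunorm2 A Z / \<epsilon>)"
    using is_norm_wedge_decomposition[OF assms(2,3)] by blast
  let ?m = "CARD('n) - 1"
  have I: "{1..<CARD('n)} = {1..?m}" "card {1..?m} + 1 = CARD('n)"
    using assms(1) by auto
  show ?thesis
  proof (intro exI[of _ "2 * K * ?m"] conjI allI impI)
    show "0 < 2 * K * ?m"
      using \<open>K > 0\<close> assms(1) by simp
    fix \<epsilon> :: real and Z :: "real^'n^'n" and g :: "nat \<Rightarrow> 'n carnot"
    assume "\<epsilon> > 0" "antisym_mat Z" "\<forall>j<CARD('n). in_G (g j)" "g 0 = gzero"
      "\<epsilon> \<le> MinHeight A (\<lambda>j. proj (g j)) {1..<CARD('n)}"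
    moreover define B where "B = K * eunorm2 A Z / \<epsilon>"
    ultimately obtain w where Z: "Z = (\<Sum>j=1..?m. wedge (w j) (fst (g j)))"
      and w: "\<forall>j\<in>{1..?m}. N (w j) \<le> B"
      using decomposition[of Z "{1..?m}" \<epsilon> "\<lambda>j. proj (g j)"] I by (auto simp: proj_def)
    have "dcc N (g 0) (gmult (0, Z) (g ?m)) \<le> (\<Sum>j=1..?m. dcc N (g (j - 1)) (g j)) + 2 * (?m * B)"
      using dcc_wedge_chain_le[of N g ?m w, OF assms(2) \<open>g 0 = gzero\<close>] \<open>\<forall>j<CARD('n). in_G (g j)\<close>
        sum_bounded_above[of "{1..?m}" "\<lambda>j. N (w j)" B] w assms(1)
      by (simp add: Z)
    then show "dcc N (g 0) (gmult (0, Z) (g ?m))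
        \<le> 2 * K * ?m * eunorm2 A Z / \<epsilon> + (\<Sum>j=1..?m. dcc N (g (j-1)) (g j))"
      by (simp add: B_def algebra_simps)
  qed
qed

end
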